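(* Let $G$ be a graph with a weak IASI $f$, let $e=uv$ be an edge of $G$, and let $G'$ be the graph obtained by subdividing $e$, i.e. replacing $e$ by a new vertex $w$ and edges $uw$, $wv$. Let $f'$ be the induced labeling of $G'$ which agrees with $f$ on $V(G)$ and assigns to $w$ the set $f^+(e)$. Then $G'$ admits this induced weak IASI (i.e. $f'$ is a weak IASI of $G'$) if and only if $e$ is mono-indexed under $f$.
   Context: Let $\mathbb{N}_0$ be the set of non-negative integers; for $A,B\subseteq\mathbb{N}_0$, $A+B=\{a+b:a\in A,b\in B\}$. An integer additive set-indexer (IASI) of a graph $G$ is an injective map $f:V(G)\to\mathcal{P}(\mathbb{N}_0)$ such that $f^+:E(G)\to\mathcal{P}(\mathbb{N}_0)$, $f^+(uv)=f(u)+f(v)$, is injective. A weak IASI is an IASI with $|f^+(uv)|=\max(|f(u)|,|f(v)|)$ for every edge $uv$. A vertex $v$ (resp. edge $e$) is mono-indexed if $|f(v)|=1$ (resp. $|f^+(e)|=1$).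
   Formalization: The induced labeling f' is assumed to be an IASI of G' (injective on vertices and on edge sums), and every label f(v) is a finite non-empty set. Each condition added here is assumed in the paper as well or is needed for the statement above to hold. *)

theory Defs
  imports Main
begin

definition sumset :: "nat set \<Rightarrow> nat set \<Rightarrow> nat set" where
  "sumset A B = {a + b | a b. a \<in> A \<and> b \<in> B}"

definition graph :: "'a set \<Rightarrow> 'a set set \<Rightarrow> bool" where
  "graph V E \<longleftrightarrow> finite V \<and>
     (\<forall>e\<in>E. \<exists>x y. x \<in> V \<and> y \<in> V \<and> x \<noteq> y \<and> e = {x, y})"

definition iasi :: "'a set \<Rightarrow> 'a set set \<Rightarrow> ('a \<Rightarrow> nat set) \<Rightarrow> bool" where
  "iasi V E f \<longleftrightarrow> inj_on f V \<and>
     (\<forall>x y x' y'. {x, y} \<in> E \<longrightarrow> {x', y'} \<in> E \<longrightarrow>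
        sumset (f x) (f y) = sumset (f x') (f y') \<longrightarrow> {x, y} = {x', y'})"

definition weak_iasi :: "'a set \<Rightarrow> 'a set set \<Rightarrow> ('a \<Rightarrow> nat set) \<Rightarrow> bool" where
  "weak_iasi V E f \<longleftrightarrow> iasi V E f \<and>
     (\<forall>x y. {x, y} \<in> E \<longrightarrow>
        card (sumset (f x) (f y)) = max (card (f x)) (card (f y)))"

definition mono_indexed_edge :: "('a \<Rightarrow> nat set) \<Rightarrow> 'a \<Rightarrow> 'a \<Rightarrow> bool" where
  "mono_indexed_edge f x y \<longleftrightarrow> card (sumset (f x) (f y)) = 1"

definition subdiv_vertices :: "'a set \<Rightarrow> 'a \<Rightarrow> 'a set" where
  "subdiv_vertices V w = insert w V"

definition subdiv_edges :: "'a set set \<Rightarrow> 'a \<Rightarrow> 'a \<Rightarrow> 'a \<Rightarrow> 'a set set" where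
  "subdiv_edges E u v w = insert {u, w} (insert {w, v} (E - {{u, v}}))"

definition subdiv_label :: "('a \<Rightarrow> nat set) \<Rightarrow> 'a \<Rightarrow> 'a \<Rightarrow> 'a \<Rightarrow> 'a \<Rightarrow> nat set" where
  "subdiv_label f u v w = f(w := sumset (f u) (f v))"

end

theory Submission
  imports Defs
begin

text \<open>For finite nonempty \<open>A\<close> and \<open>B\<close>, the translate \<open>min A + B\<close> shows \<open>|A + B| \<ge> |B|\<close>,
  and if \<open>A\<close> has a second element \<open>y\<close> then \<open>y + max B\<close> lies outside it, so \<open>|A + B| > |B|\<close>.
  Hence a label of size at least two strictly enlarges every sumset it takes part in.
  After subdividing \<open>uv\<close>, the edge \<open>uw\<close> carries \<open>f(u) + (f(u) + f(v))\<close>, and the weak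
  condition forces it to have the size of \<open>f(u) + f(v)\<close>; so \<open>|f(u)| = 1\<close> and likewise
  \<open>|f(v)| = 1\<close>. Conversely, if \<open>f(u)\<close> and \<open>f(v)\<close> are singletons, so are \<open>f(w)\<close> and
  the labels of both new edges.\<close>

lemma sumset_commute: "sumset A B = sumset B A"
  unfolding sumset_def by (auto simp: add.commute; metis add.commute)

lemma sumset_singleton [simp]: "sumset {a} {b} = {a + b}"
  unfolding sumset_def by auto

lemma sumset_eq_image: "sumset A B = (\<lambda>(a, b). a + b) ` (A \<times> B)"
  unfolding sumset_def by auto

lemma finite_sumset: "finite A \<Longrightarrow> finite B \<Longrightarrow> finite (sumset A B)"
  by (simp add: sumset_eq_image)

lemma sumset_eq_empty_iff: "sumset A B = {} \<longleftrightarrow> A = {} \<or> B = {}"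
  unfolding sumset_def by auto

lemma card_le_card_sumset:
  assumes "finite A" "finite B" "A \<noteq> {}"
  shows "card B \<le> card (sumset A B)"
proof -
  have "(+) (Min A) ` B \<subseteq> sumset A B"
    using assms Min_in unfolding sumset_def by blast
  then have "card ((+) (Min A) ` B) \<le> card (sumset A B)"
    using assms by (intro card_mono finite_sumset) auto
  then show ?thesis by (simp add: card_image)
qed

lemma card_less_card_sumset:
  assumes "finite A" "finite B" "B \<noteq> {}" "x \<in> A" "y \<in> A" "x < y"
  shows "card B < card (sumset A B)"
proof -
  have sub: "insert (y + Max B) ((+) x ` B) \<subseteq> sumset A B"
    using assms Max_in[of B] unfolding sumset_def by blast
  have "y + Max B \<notin> (+) x ` B"
    using assms Max_ge[of B] by fastforce
  then have "card (insert (y + Max B) ((+) x ` B)) = Suc (card B)"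
    using assms by (simp add: card_image)
  moreover have "card (insert (y + Max B) ((+) x ` B)) \<le> card (sumset A B)"
    using sub assms by (intro card_mono finite_sumset) auto
  ultimately show ?thesis by simp
qed

lemma card_eq_1_if_card_sumset_eq:
  fixes A B :: "nat set"
  assumes "finite A" "A \<noteq> {}" "finite B" "B \<noteq> {}"
    and "card (sumset A B) = card B"
  shows "card A = 1"
proof (rule ccontr)
  assume "card A \<noteq> 1"
  with assms(1,2) have "\<not> card A \<le> Suc 0" by (simp add: le_Suc_eq)
  then obtain x y where "x \<in> A" "y \<in> A" "x < y"
    using card_le_Suc0_iff_eq[OF assms(1)] by (metis linorder_neq_iff)
  with assms show False using card_less_card_sumset by fastforce
qed

lemma card_sumset_eq_1_iff:
  assumes "finite A" "A \<noteq> {}" "finite B" "B \<noteq> {}"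
  shows "card (sumset A B) = 1 \<longleftrightarrow> card A = 1 \<and> card B = 1"
proof
  assume "card (sumset A B) = 1"
  then have "card A \<le> 1" "card B \<le> 1"
    using assms card_le_card_sumset[of A B] card_le_card_sumset[of B A]
    by (auto simp: sumset_commute)
  with assms show "card A = 1 \<and> card B = 1"
    by (simp add: le_Suc_eq card_gt_0_iff)
next
  assume "card A = 1 \<and> card B = 1"
  then obtain a b where "A = {a}" "B = {b}"
    by (metis card_1_singletonE)
  then show "card (sumset A B) = 1" by simp
qed

lemma graph_edge_endpoints:
  assumes "graph V E" "{x, y} \<in> E"
  shows "x \<in> V" "y \<in> V" "x \<noteq> y"
  using assms unfolding graph_def by (auto simp: doubleton_eq_iff)

lemma subdiv_edges_cases:
  assumes "{x, y} \<in> subdiv_edges E u v w"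
  obtains "{x, y} \<in> E" | "x = u" "y = w" | "x = w" "y = u" | "x = w" "y = v" | "x = v" "y = w"
  using assms unfolding subdiv_edges_def by (auto simp: doubleton_eq_iff)

lemma subdiv_label_old [simp]: "x \<noteq> w \<Longrightarrow> subdiv_label f u v w x = f x"
  and subdiv_label_new [simp]: "subdiv_label f u v w w = sumset (f u) (f v)"
  unfolding subdiv_label_def by auto

lemma mono_indexed_if_weak_iasi_subdiv:
  assumes "{u, v} \<subseteq> V" "w \<notin> V"
    and fin: "finite (f u)" "f u \<noteq> {}" "finite (f v)" "f v \<noteq> {}"
    and "weak_iasi (subdiv_vertices V w) (subdiv_edges E u v w) (subdiv_label f u v w)"
  shows "mono_indexed_edge f u v"
proof -
  let ?S = "sumset (f u) (f v)"
  have w: "u \<noteq> w" "v \<noteq> w" using assms(1,2) by auto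
  have S: "finite ?S" "?S \<noteq> {}"
    using fin by (auto simp: finite_sumset sumset_eq_empty_iff)
  have "{u, w} \<in> subdiv_edges E u v w" "{w, v} \<in> subdiv_edges E u v w"
    unfolding subdiv_edges_def by auto
  with assms(7) w have "card (sumset (f u) ?S) = max (card (f u)) (card ?S)"
    "card (sumset ?S (f v)) = max (card ?S) (card (f v))"
    unfolding weak_iasi_def by (metis subdiv_label_old subdiv_label_new)+
  moreover have "card (f u) \<le> card ?S" "card (f v) \<le> card ?S"
    using fin card_le_card_sumset[of "f v" "f u"] card_le_card_sumset[of "f u" "f v"]
    by (auto simp: sumset_commute)
  ultimately have "card (sumset (f u) ?S) = card ?S" "card (sumset (f v) ?S) = card ?S"
    by (auto simp: sumset_commute)
  then have "card (f u) = 1" "card (f v) = 1"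
    using fin S card_eq_1_if_card_sumset_eq by blast+
  then show ?thesis
    unfolding mono_indexed_edge_def using fin card_sumset_eq_1_iff by blast
qed

lemma weak_iasi_subdiv_if_mono_indexed:
  assumes "graph V E" "weak_iasi V E f" "{u, v} \<subseteq> V" "w \<notin> V"
    and fin: "finite (f u)" "f u \<noteq> {}" "finite (f v)" "f v \<noteq> {}"
    and "mono_indexed_edge f u v"
    and "iasi (subdiv_vertices V w) (subdiv_edges E u v w) (subdiv_label f u v w)"
  shows "weak_iasi (subdiv_vertices V w) (subdiv_edges E u v w) (subdiv_label f u v w)"
proof -
  let ?g = "subdiv_label f u v w"
  have w: "u \<noteq> w" "v \<noteq> w" using assms(3,4) by auto
  obtain p q where pq: "f u = {p}" "f v = {q}"
    using assms(9) fin card_sumset_eq_1_iff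
    unfolding mono_indexed_edge_def by (metis card_1_singletonE)
  have "card (sumset (?g x) (?g y)) = max (card (?g x)) (card (?g y))"
    if "{x, y} \<in> subdiv_edges E u v w" for x y
    using that
  proof (cases rule: subdiv_edges_cases)
    case 1
    then have "x \<noteq> w" "y \<noteq> w" using graph_edge_endpoints assms(1,4) by metis+
    with 1 assms(2) show ?thesis unfolding weak_iasi_def by simp
  qed (use pq w in auto)
  with assms(10) show ?thesis unfolding weak_iasi_def by blast
qed

theorem theorem2p20:
  fixes V :: "'a set" and E :: "'a set set" and f :: "'a \<Rightarrow> nat set"
    and u v w :: 'a
  assumes "graph V E"
    and "weak_iasi V E f"
    and "\<forall>x\<in>V. finite (f x) \<and> f x \<noteq> {}"
    and "{u, v} \<in> E"
    and "w \<notin> V"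
    and "iasi (subdiv_vertices V w) (subdiv_edges E u v w) (subdiv_label f u v w)"
  shows "weak_iasi (subdiv_vertices V w) (subdiv_edges E u v w) (subdiv_label f u v w)
         \<longleftrightarrow> mono_indexed_edge f u v"
proof -
  have "u \<in> V" "v \<in> V" using graph_edge_endpoints assms(1,4) by metis+
  with assms(3) have "finite (f u)" "f u \<noteq> {}" "finite (f v)" "f v \<noteq> {}" by auto
  with assms \<open>u \<in> V\<close> \<open>v \<in> V\<close> show ?thesis
    using mono_indexed_if_weak_iasi_subdiv weak_iasi_subdiv_if_mono_indexed
    by (metis empty_subsetI insert_subset)
qed

end
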